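(* Let $\psi=\Psi(\tau^*,R^* )$ for some generic $M$-layer model $(\tau^*,R^* )$, and let $(\sigma,\alpha)$ be the data of an $M$-layer model $(\tau,R)\in U_\psi\times\mathcal{R}_\psi$. Let $\sigma_\psi=(\sigma_{\psi(k^0)},\sigma_{\psi(k^1)},\ldots,\sigma_{\psi(k^M)})\in\mathbb{R}^{M+1}$. Then $$\tau=\sigma_\psi J_M,\qquad R_0=\alpha_1,\qquad R_n=\frac{\alpha_{\psi(k^n)}}{\prod_{j=0}^{n-1}(1-R_j^2)}\quad(1\le n\le M).$$
   Context: Primary vectors: $k^n\in\mathbb{Z}^{M+1}$ has $k^n_j=1$ for $j\le n$ and $0$ otherwise ($0\le n\le M$). $J_M$ is the $(M+1)\times(M+1)$ matrix with $1$ on the diagonal, $-1$ on the superdiagonal and $0$ elsewhere (the inverse of the upper-triangular all-ones matrix $K_M$ whose columns are $(k^0)^T,\ldots,(k^M)^T$); $\tau,\sigma_\psi$ are row vectors. An $M$-layer model ($M\ge1$) is $(\tau,R)$ with $\tau\in\mathbb{R}^{M+1}_{>0}$, $R\in(-1,1)^{M+1}$. $\mathfrak{L}_M\subset\mathbb{Z}^{M+1}_{\geq0}$: all $k$ with $k_0=1$ and $k_n>0\Rightarrow k_{n-1}>0$; $\mathfrak{L}^\tau_M=\{k\in\mathfrak{L}_M:\langle k,\tau\rangle\le\langle\mathbb{1},\tau\rangle\}$. Amplitude polynomial: $\mathbb{1}=(1,\ldots,1)$; inequalities and $\min$ entrywise; $x^k=\prod_n x_n^{k_n}$, $\binom{k}{b}=\prod_n\binom{k_n}{b_n}$;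 $\tilde k=(k_1,\ldots,k_M,0)$, $u=\min\{\mathbb{1},\tilde k\}$, $V(k)=\{b:u\le b\le\min\{k,\tilde k\}\}$, $a(x,k)=\sum_{b\in V(k)}\binom{k}{b}\binom{\tilde k-u}{b-u}(-x)^{\tilde k-b}x^{k-b}\prod_n(1-x_n^2)^{b_n}$. Data: normal form $\sum_{n=1}^d\alpha_n\delta(t-\sigma_n)$ ($\alpha_n\ne0$, $\sigma_1<\cdots<\sigma_d$) of $D^{(\tau,R)}(t)=\sum_{k\in\mathfrak{L}^\tau_M}a(R,k)\delta(t-\langle k,\tau\rangle)$. Enumeration function $\Psi(\tau,R):\mathfrak{L}^\tau_M\to\{0,\ldots,d\}$: $k\mapsto0$ if $\langle k,\tau\rangle\notin\{\sigma_n\}$, else $k\mapsto1+\#\{n:\sigma_n<\langle k,\tau\rangle\}$. Generic: $\Psi(\tau,R)$ injective and never $0$. $\mathcal{R}_\psi=\{R'\in(-1,1)^{M+1}:a(R',k)\ne0\ \forall k\in\mathfrak{L}^{\tau^*}_M\}$; $U_\psi=\{\tau'\in\mathbb{R}^{M+1}_{>0}:\Psi(\tau',R')=\psi\ \forall R'\in\mathcal{R}_\psi\}$ (equality including domains). *)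

theory Defs
  imports Complex_Main
begin

text \<open>Vectors in Z^{M+1} / R^{M+1} are functions on nat, only indices 0..M are used.
  Lattice vectors k are required to vanish outside {0..M} so that sets of them are canonical.\<close>

definition ip :: "nat \<Rightarrow> (nat \<Rightarrow> nat) \<Rightarrow> (nat \<Rightarrow> real) \<Rightarrow> real" where
  "ip M k \<tau> = (\<Sum>j\<le>M. real (k j) * \<tau> j)"

definition one_ip :: "nat \<Rightarrow> (nat \<Rightarrow> real) \<Rightarrow> real" where
  "one_ip M \<tau> = (\<Sum>j\<le>M. \<tau> j)"

definition kvec :: "nat \<Rightarrow> nat \<Rightarrow> nat" where
  "kvec n = (\<lambda>j. if j \<le> n then 1 else 0)"

definition LM :: "nat \<Rightarrow> (nat \<Rightarrow> nat) set" where
  "LM M = {k. k 0 = 1 \<and> (\<forall>n. 1 \<le> n \<and> n \<le> M \<and> k n > 0 \<longrightarrow> k (n - 1) > 0)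
              \<and> (\<forall>n>M. k n = 0)}"

definition Ltau :: "nat \<Rightarrow> (nat \<Rightarrow> real) \<Rightarrow> (nat \<Rightarrow> nat) set" where
  "Ltau M \<tau> = {k \<in> LM M. ip M k \<tau> \<le> one_ip M \<tau>}"

definition ktilde :: "nat \<Rightarrow> (nat \<Rightarrow> nat) \<Rightarrow> nat \<Rightarrow> nat" where
  "ktilde M k n = (if n < M then k (Suc n) else 0)"

definition uvec :: "nat \<Rightarrow> (nat \<Rightarrow> nat) \<Rightarrow> nat \<Rightarrow> nat" where
  "uvec M k n = min 1 (ktilde M k n)"

definition Vset :: "nat \<Rightarrow> (nat \<Rightarrow> nat) \<Rightarrow> (nat \<Rightarrow> nat) set" where
  "Vset M k = {b. (\<forall>n\<le>M. uvec M k n \<le> b n \<and> b n \<le> min (k n) (ktilde M k n))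
                 \<and> (\<forall>n>M. b n = 0)}"

definition ampl :: "nat \<Rightarrow> (nat \<Rightarrow> real) \<Rightarrow> (nat \<Rightarrow> nat) \<Rightarrow> real" where
  "ampl M x k = (\<Sum>b\<in>Vset M k. \<Prod>n\<le>M.
      real (k n choose b n) * real ((ktilde M k n - uvec M k n) choose (b n - uvec M k n))
      * (- x n) ^ (ktilde M k n - b n) * x n ^ (k n - b n) * (1 - (x n)\<^sup>2) ^ (b n))"

text \<open>coefficient of delta(t - s) in D^(tau,R), after collecting equal arrival times\<close>
definition coef :: "nat \<Rightarrow> (nat \<Rightarrow> real) \<Rightarrow> (nat \<Rightarrow> real) \<Rightarrow> real \<Rightarrow> real" where
  "coef M \<tau> R s = (\<Sum>k\<in>{k \<in> Ltau M \<tau>. ip M k \<tau> = s}. ampl M R k)"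

definition data_times :: "nat \<Rightarrow> (nat \<Rightarrow> real) \<Rightarrow> (nat \<Rightarrow> real) \<Rightarrow> real set" where
  "data_times M \<tau> R = {s. s \<in> (\<lambda>k. ip M k \<tau>) ` Ltau M \<tau> \<and> coef M \<tau> R s \<noteq> 0}"

definition data_d :: "nat \<Rightarrow> (nat \<Rightarrow> real) \<Rightarrow> (nat \<Rightarrow> real) \<Rightarrow> nat" where
  "data_d M \<tau> R = card (data_times M \<tau> R)"

text \<open>sigma_n for 1 <= n <= d (1-indexed, increasing)\<close>
definition data_sigma :: "nat \<Rightarrow> (nat \<Rightarrow> real) \<Rightarrow> (nat \<Rightarrow> real) \<Rightarrow> nat \<Rightarrow> real" where
  "data_sigma M \<tau> R n = sorted_list_of_set (data_times M \<tau> R) ! (n - 1)"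

definition data_alpha :: "nat \<Rightarrow> (nat \<Rightarrow> real) \<Rightarrow> (nat \<Rightarrow> real) \<Rightarrow> nat \<Rightarrow> real" where
  "data_alpha M \<tau> R n = coef M \<tau> R (data_sigma M \<tau> R n)"

definition Psi :: "nat \<Rightarrow> (nat \<Rightarrow> real) \<Rightarrow> (nat \<Rightarrow> real) \<Rightarrow> (nat \<Rightarrow> nat) \<Rightarrow> nat option" where
  "Psi M \<tau> R = (\<lambda>k. if k \<in> Ltau M \<tau> then
      Some (if ip M k \<tau> \<notin> data_sigma M \<tau> R ` {1..data_d M \<tau> R} then 0
            else 1 + card {n \<in> {1..data_d M \<tau> R}. data_sigma M \<tau> R n < ip M k \<tau>})
    else None)"

definition is_model :: "nat \<Rightarrow> (nat \<Rightarrow> real) \<Rightarrow> (nat \<Rightarrow> real) \<Rightarrow> bool" where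
  "is_model M \<tau> R \<longleftrightarrow> 1 \<le> M \<and> (\<forall>n\<le>M. 0 < \<tau> n) \<and> (\<forall>n\<le>M. -1 < R n \<and> R n < 1)"

definition generic :: "nat \<Rightarrow> (nat \<Rightarrow> real) \<Rightarrow> (nat \<Rightarrow> real) \<Rightarrow> bool" where
  "generic M \<tau> R \<longleftrightarrow> inj_on (\<lambda>k. the (Psi M \<tau> R k)) (Ltau M \<tau>)
      \<and> (\<forall>k\<in>Ltau M \<tau>. the (Psi M \<tau> R k) \<noteq> 0)"

text \<open>R_psi, depending on the generic model's tau*\<close>
definition Rset :: "nat \<Rightarrow> (nat \<Rightarrow> real) \<Rightarrow> (nat \<Rightarrow> real) set" where
  "Rset M \<tau>s = {R'. (\<forall>n\<le>M. -1 < R' n \<and> R' n < 1) \<and> (\<forall>k\<in>Ltau M \<tau>s. ampl M R' k \<noteq> 0)}"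

definition Uset :: "nat \<Rightarrow> (nat \<Rightarrow> real) \<Rightarrow> ((nat \<Rightarrow> nat) \<Rightarrow> nat option) \<Rightarrow> (nat \<Rightarrow> real) set" where
  "Uset M \<tau>s \<psi> = {\<tau>'. (\<forall>n\<le>M. 0 < \<tau>' n) \<and> (\<forall>R'\<in>Rset M \<tau>s. Psi M \<tau>' R' = \<psi>)}"

definition JM :: "nat \<Rightarrow> nat \<Rightarrow> real" where
  "JM i j = (if i = j then 1 else if j = Suc i then -1 else 0)"

definition vecmat :: "nat \<Rightarrow> (nat \<Rightarrow> real) \<Rightarrow> (nat \<Rightarrow> nat \<Rightarrow> real) \<Rightarrow> nat \<Rightarrow> real" where
  "vecmat M v A j = (\<Sum>i\<le>M. v i * A i j)"

end

theory Submission
  imports Defs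
begin

(* Genericity is a property of the enumeration function alone (injective and
   never 0 on its domain L^tau_M), so a model (tau,R) whose enumeration function equals the
   generic psi is itself generic.  For a generic model every k in L^tau_M arrives alone at the
   time <k,tau>, at position psi(k) of the sorted data; hence sigma_psi(k) = <k,tau> and
   alpha_psi(k) = a(R,k).  Applied to the primary vectors k^n, whose arrival times are the
   partial sums tau_0 + ... + tau_n and whose amplitudes are R_n (1-R_0^2)...(1-R_(n-1)^2),
   this gives the inversion formulas: J_M turns partial sums back into tau, k^0 arrives first
   (so psi(k^0) = 1), and dividing by the positive product recovers R_n. *)

lemma data_times_finite:
  assumes "m \<in> {1..data_d M \<tau> R}"
  shows "finite (data_times M \<tau> R)"
  using assms unfolding data_d_def by (metis atLeastAtMost_iff card.infinite le_zero_eq not_one_le_zero)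

lemma data_sigma_in_times:
  assumes "m \<in> {1..data_d M \<tau> R}"
  shows "data_sigma M \<tau> R m \<in> data_times M \<tau> R"
proof -
  have "m - 1 < length (sorted_list_of_set (data_times M \<tau> R))"
    using assms by (auto simp: data_d_def)
  then show ?thesis unfolding data_sigma_def using data_times_finite[OF assms]
    by (metis nth_mem set_sorted_list_of_set)
qed

lemma data_sigma_less_iff:
  assumes "m \<in> {1..data_d M \<tau> R}" "n \<in> {1..data_d M \<tau> R}"
  shows "data_sigma M \<tau> R n < data_sigma M \<tau> R m \<longleftrightarrow> n < m"
proof -
  define xs where "xs = sorted_list_of_set (data_times M \<tau> R)"
  have strict: "sorted_wrt (<) xs" and sorted: "sorted xs" by (simp_all add: xs_def)
  have idx: "m - 1 < length xs" "n - 1 < length xs"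
    using assms by (auto simp: xs_def data_d_def)
  have "xs ! (n - 1) < xs ! (m - 1) \<longleftrightarrow> n - 1 < m - 1"
  proof
    assume "n - 1 < m - 1"
    then show "xs ! (n - 1) < xs ! (m - 1)" by (rule sorted_wrt_nth_less[OF strict _ idx(1)])
  next
    assume "xs ! (n - 1) < xs ! (m - 1)"
    then have "\<not> m - 1 \<le> n - 1" using sorted_nth_mono[OF sorted _ idx(2)] by fastforce
    then show "n - 1 < m - 1" by simp
  qed
  then show ?thesis using assms by (auto simp: data_sigma_def xs_def)
qed

lemma data_sigma_rank:
  assumes "m \<in> {1..data_d M \<tau> R}"
  shows "1 + card {n \<in> {1..data_d M \<tau> R}. data_sigma M \<tau> R n < data_sigma M \<tau> R m} = m"
proof -
  have "{n \<in> {1..data_d M \<tau> R}. data_sigma M \<tau> R n < data_sigma M \<tau> R m} = {1..m - 1}"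
    using data_sigma_less_iff[OF assms] assms by auto
  then show ?thesis using assms by simp
qed

lemma Ltau_eq_dom_Psi: "Ltau M \<tau> = {k. Psi M \<tau> R k \<noteq> None}"
  by (auto simp: Psi_def)

lemma generic_if_same_Psi:
  assumes "Psi M \<tau> R = Psi M \<tau>' R'" and "generic M \<tau>' R'"
  shows "generic M \<tau> R"
proof -
  have "Ltau M \<tau> = Ltau M \<tau>'"
    using Ltau_eq_dom_Psi[of M \<tau> R] Ltau_eq_dom_Psi[of M \<tau>' R'] assms(1) by simp
  then show ?thesis using assms unfolding generic_def by simp
qed

lemma generic_sigma_Psi:
  assumes "generic M \<tau> R" and k: "k \<in> Ltau M \<tau>"
  shows "the (Psi M \<tau> R k) \<in> {1..data_d M \<tau> R}"
    and "data_sigma M \<tau> R (the (Psi M \<tau> R k)) = ip M k \<tau>"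
proof -
  have "the (Psi M \<tau> R k) \<noteq> 0" using assms by (simp add: generic_def)
  then obtain m where m: "m \<in> {1..data_d M \<tau> R}" "ip M k \<tau> = data_sigma M \<tau> R m"
    using k by (auto simp: Psi_def split: if_splits)
  have "the (Psi M \<tau> R k) = m"
    using k m data_sigma_rank[OF m(1)] by (simp add: Psi_def)
  then show "the (Psi M \<tau> R k) \<in> {1..data_d M \<tau> R}"
    and "data_sigma M \<tau> R (the (Psi M \<tau> R k)) = ip M k \<tau>"
    using m by simp_all
qed

lemma generic_ip_inj:
  assumes "generic M \<tau> R" "k \<in> Ltau M \<tau>" "k' \<in> Ltau M \<tau>" "ip M k \<tau> = ip M k' \<tau>"
  shows "k = k'"
proof -
  have same: "the (Psi M \<tau> R k) = the (Psi M \<tau> R k')" using assms(2-4) by (simp add: Psi_def)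
  have inj: "inj_on (\<lambda>k. the (Psi M \<tau> R k)) (Ltau M \<tau>)"
    using assms(1) by (simp add: generic_def)
  show ?thesis by (rule inj_onD[OF inj same assms(2,3)])
qed

lemma generic_alpha_Psi:
  assumes "generic M \<tau> R" and k: "k \<in> Ltau M \<tau>"
  shows "data_alpha M \<tau> R (the (Psi M \<tau> R k)) = ampl M R k"
proof -
  have alone: "{k' \<in> Ltau M \<tau>. ip M k' \<tau> = ip M k \<tau>} = {k}"
  proof (rule set_eqI)
    fix k'
    show "k' \<in> {k' \<in> Ltau M \<tau>. ip M k' \<tau> = ip M k \<tau>} \<longleftrightarrow> k' \<in> {k}"
      using generic_ip_inj[OF assms(1) k, of k'] k by auto
  qed
  show ?thesis
    unfolding data_alpha_def generic_sigma_Psi(2)[OF assms] coef_def alone by simp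
qed

lemma ip_kvec:
  assumes "n \<le> M"
  shows "ip M (kvec n) \<tau> = (\<Sum>j\<le>n. \<tau> j)"
proof -
  have "ip M (kvec n) \<tau> = (\<Sum>j\<le>M. if j \<le> n then \<tau> j else 0)"
    unfolding ip_def kvec_def by (rule sum.cong) auto
  also have "\<dots> = (\<Sum>j\<in>{..M} \<inter> {j. j \<le> n}. \<tau> j)" by (simp add: sum.inter_restrict)
  also have "{..M} \<inter> {j. j \<le> n} = {..n}" using assms by auto
  finally show ?thesis .
qed

lemma kvec_in_Ltau:
  assumes "n \<le> M" "\<forall>j\<le>M. 0 < \<tau> j"
  shows "kvec n \<in> Ltau M \<tau>"
proof -
  have "kvec n \<in> LM M" using assms(1) unfolding LM_def kvec_def by auto
  moreover have "ip M (kvec n) \<tau> \<le> one_ip M \<tau>"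
    unfolding ip_kvec[OF assms(1)] one_ip_def
    by (rule sum_mono2) (use assms in auto)
  ultimately show ?thesis by (simp add: Ltau_def)
qed

text \<open>The amplitude of k^n: the only admissible b is the indicator of {0..n-1}, giving
  a(x,k^n) = x_n (1 - x_0^2) ... (1 - x_(n-1)^2).\<close>
lemma ampl_kvec:
  assumes "n \<le> M"
  shows "ampl M x (kvec n) = x n * (\<Prod>j<n. 1 - (x j)\<^sup>2)"
proof -
  define b where "b = (\<lambda>j::nat. if j < n then 1 else (0::nat))"
  have kt: "ktilde M (kvec n) = b" using assms by (auto simp: ktilde_def kvec_def b_def)
  have u: "uvec M (kvec n) = b" by (auto simp: uvec_def kt b_def)
  have V: "Vset M (kvec n) = {b}"
  proof (intro set_eqI iffI)
    fix b' assume "b' \<in> Vset M (kvec n)"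
    then have bounds: "\<forall>j\<le>M. b j \<le> b' j \<and> b' j \<le> min (kvec n j) (b j)"
      and outside: "\<forall>j>M. b' j = 0"
      by (simp_all add: Vset_def kt u)
    have "b' j = b j" for j
    proof (cases "j \<le> M")
      case True then show ?thesis using bounds[rule_format, OF True] by (metis antisym min.bounded_iff)
    next
      case False then show ?thesis using outside assms by (simp add: b_def)
    qed
    then show "b' \<in> {b}" by auto
  next
    fix b' assume "b' \<in> {b}"
    then show "b' \<in> Vset M (kvec n)"
      using assms unfolding Vset_def kt u by (auto simp: b_def kvec_def)
  qed
  have "ampl M x (kvec n) = (\<Prod>j\<le>M. if j < n then 1 - (x j)\<^sup>2 else if j = n then x n else 1)"
    unfolding ampl_def V kt u by (simp, rule prod.cong) (auto simp: b_def kvec_def)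
  also have "\<dots> = (\<Prod>j\<in>{..<n} \<union> {n} \<union> {n<..M}. if j < n then 1 - (x j)\<^sup>2 else if j = n then x n else 1)"
    using assms by (intro prod.cong) auto
  also have "\<dots> = (\<Prod>j<n. 1 - (x j)\<^sup>2) * x n"
    by (simp add: prod.union_disjoint disjoint_iff)
  finally show ?thesis by simp
qed

text \<open>Every lattice vector has k_0 = 1, so no arrival precedes tau_0, the time of k^0.\<close>
lemma tau0_le_ip:
  assumes "k \<in> LM M" "\<forall>j\<le>M. 0 < \<tau> j"
  shows "\<tau> 0 \<le> ip M k \<tau>"
proof -
  have "real (k 0) * \<tau> 0 \<le> (\<Sum>j\<le>M. real (k j) * \<tau> j)"
    by (rule member_le_sum) (use assms in auto)
  then show ?thesis using assms(1) by (simp add: ip_def LM_def)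
qed

lemma generic_Psi_kvec0:
  assumes gen: "generic M \<tau> R" and pos: "\<forall>j\<le>M. 0 < \<tau> j"
  shows "the (Psi M \<tau> R (kvec 0)) = 1"
proof (rule ccontr)
  let ?m = "the (Psi M \<tau> R (kvec 0))"
  assume "?m \<noteq> 1"
  have k0: "kvec 0 \<in> Ltau M \<tau>" using kvec_in_Ltau[OF _ pos] by simp
  have m: "?m \<in> {1..data_d M \<tau> R}" "data_sigma M \<tau> R ?m = \<tau> 0"
    using generic_sigma_Psi[OF gen k0] ip_kvec[of 0 M \<tau>] by simp_all
  then have one: "1 \<in> {1..data_d M \<tau> R}" by auto
  have "1 < ?m" using m(1) \<open>?m \<noteq> 1\<close> by simp
  then have "data_sigma M \<tau> R 1 < \<tau> 0"
    using data_sigma_less_iff[OF m(1) one] m(2) by simp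
  moreover obtain k where "k \<in> Ltau M \<tau>" "data_sigma M \<tau> R 1 = ip M k \<tau>"
    using data_sigma_in_times[OF one] by (auto simp: data_times_def)
  then have "\<tau> 0 \<le> data_sigma M \<tau> R 1" using tau0_le_ip[OF _ pos, of k] by (simp add: Ltau_def)
  ultimately show False by simp
qed

lemma vecmat_partial_sums_JM:
  assumes "n \<le> M"
  shows "vecmat M (\<lambda>j. \<Sum>i\<le>j. t i) JM n = t n"
proof (cases n)
  case 0
  have "vecmat M (\<lambda>j. \<Sum>i\<le>j. t i) JM n = (\<Sum>i\<le>M. if i = 0 then (\<Sum>l\<le>i. t l) else 0)"
    unfolding vecmat_def 0 by (rule sum.cong) (auto simp: JM_def)
  then show ?thesis using 0 by simp
next
  case (Suc m)
  have "vecmat M (\<lambda>j. \<Sum>i\<le>j. t i) JM n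
      = (\<Sum>i\<le>M. (if i = n then (\<Sum>l\<le>i. t l) else 0) - (if i = m then (\<Sum>l\<le>i. t l) else 0))"
    unfolding vecmat_def by (rule sum.cong) (auto simp: JM_def Suc)
  then show ?thesis using assms Suc by (simp add: sum_subtractf)
qed

lemma transmission_prod_pos:
  assumes "\<forall>j<n. -1 < x j \<and> x j < (1::real)"
  shows "0 < (\<Prod>j<n. 1 - (x j)\<^sup>2)"
proof (rule prod_pos)
  fix j assume "j \<in> {..<n}"
  then have "\<bar>x j\<bar> < 1" using assms by auto
  then show "0 < 1 - (x j)\<^sup>2" by (simp add: abs_square_less_1)
qed

theorem theorem4p4:
  fixes M :: nat and \<tau>s Rs \<tau> R :: "nat \<Rightarrow> real"
    and \<psi> :: "(nat \<Rightarrow> nat) \<Rightarrow> nat option"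
  assumes "1 \<le> M"
    and "is_model M \<tau>s Rs" and "generic M \<tau>s Rs"
    and "\<psi> = Psi M \<tau>s Rs"
    and "is_model M \<tau> R"
    and "\<tau> \<in> Uset M \<tau>s \<psi>" and "R \<in> Rset M \<tau>s"
  shows "(\<forall>n\<le>M. \<tau> n = vecmat M (\<lambda>j. data_sigma M \<tau> R (the (\<psi> (kvec j)))) JM n)
    \<and> R 0 = data_alpha M \<tau> R 1
    \<and> (\<forall>n. 1 \<le> n \<and> n \<le> M \<longrightarrow>
          R n = data_alpha M \<tau> R (the (\<psi> (kvec n))) / (\<Prod>j<n. 1 - (R j)\<^sup>2))"
proof -
  have pos: "\<forall>j\<le>M. 0 < \<tau> j" and coeff_bounds: "\<forall>n\<le>M. -1 < R n \<and> R n < 1"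
    using assms(5) by (auto simp: is_model_def)
  have \<psi>: "\<psi> = Psi M \<tau> R" using assms(6,7) by (auto simp: Uset_def)
  have gen: "generic M \<tau> R" using generic_if_same_Psi assms(3,4) \<psi> by metis
  have kL: "kvec n \<in> Ltau M \<tau>" if "n \<le> M" for n using kvec_in_Ltau[OF that pos] .
  have times: "data_sigma M \<tau> R (the (\<psi> (kvec j))) = (\<Sum>i\<le>j. \<tau> i)" if "j \<le> M" for j
    using generic_sigma_Psi(2)[OF gen kL[OF that]] ip_kvec[OF that] \<psi> by simp
  have amps: "data_alpha M \<tau> R (the (\<psi> (kvec n))) = R n * (\<Prod>j<n. 1 - (R j)\<^sup>2)"
    if "n \<le> M" for n
    using generic_alpha_Psi[OF gen kL[OF that]] ampl_kvec[OF that] \<psi> by simp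
  have "vecmat M (\<lambda>j. data_sigma M \<tau> R (the (\<psi> (kvec j)))) JM n = \<tau> n" if "n \<le> M" for n
    using vecmat_partial_sums_JM[OF that, of \<tau>] times unfolding vecmat_def by simp
  moreover have "R 0 = data_alpha M \<tau> R 1"
    using amps[of 0] generic_Psi_kvec0[OF gen pos] \<psi> by simp
  moreover have "R n = data_alpha M \<tau> R (the (\<psi> (kvec n))) / (\<Prod>j<n. 1 - (R j)\<^sup>2)"
    if "n \<le> M" for n
  proof -
    have "0 < (\<Prod>j<n. 1 - (R j)\<^sup>2)"
      by (rule transmission_prod_pos) (use coeff_bounds that in auto)
    then have "(\<Prod>j<n. 1 - (R j)\<^sup>2) \<noteq> 0" by (rule less_imp_neq[symmetric])
    then show ?thesis unfolding amps[OF that] by (rule nonzero_mult_div_cancel_right[symmetric])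
  qed
  ultimately show ?thesis by simp
qed

end
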